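(* Let $q\in\mathbb{C}\setminus\{0,1,-1\}$, let $n$ be even, and let $V$ be the complex vector space with basis $\{\bar T_m:m\in\mathbb{Z}^2\}$. For $m,k\in\mathbb{Z}^2$ let $m\wedge k=m_1k_2-m_2k_1$. Define an $n$-linear bracket on $V$ by $$\llbracket\bar T_{i_1},\dots,\bar T_{i_n}\rrbracket=\frac{1}{q-q^{-1}}\sum_{\sigma\in S_n}\mathrm{sgn}(\sigma)\,q^{\sum_{1\le k<s\le n}i_{\sigma(k)}\wedge i_{\sigma(s)}}\;\bar T_{i_1+\cdots+i_n}.$$ Then $(V,\llbracket\cdot,\dots,\cdot\rrbracket)$ is a sh-$n$-Lie algebra.
   Context: A sh-$n$-Lie algebra is a vector space $V$ with an $n$-linear bracket that is skew-symmetric, $[x_{\sigma(1)},\dots,x_{\sigma(n)}]=\mathrm{sgn}(\sigma)[x_1,\dots,x_n]$, and satisfies the sh-Jacobi identity $$\sum_{\sigma\in Sh(n,n-1)}\mathrm{sgn}(\sigma)\big[[x_{\sigma(1)},\dots,x_{\sigma(n)}],x_{\sigma(n+1)},\dots,x_{\sigma(2n-1)}\big]=0$$ for all $x_1,\dots,x_{2n-1}\in V$, where $Sh(n,n-1)=\{\sigma\in S_{2n-1}:\sigma(1)<\dots<\sigma(n),\ \sigma(n+1)<\dots<\sigma(2n-1)\}$. This bracket is the $q$-deformed $SDiff(T^2)$ $n$-algebra. *)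

theory Defs
  imports Complex_Main "HOL-Combinatorics.Combinatorics" "HOL-Library.Product_Plus"
begin

text \<open>The vector space V with basis T_m (m in Z^2) is realised as the finitely
supported functions Z^2 -> C; the basis vector T_m is the indicator of m.\<close>

type_synonym vec = "int \<times> int \<Rightarrow> complex"

definition Vspace :: "vec set" where
  "Vspace = {f. finite {m. f m \<noteq> 0}}"

definition basisT :: "int \<times> int \<Rightarrow> vec" where
  "basisT m = (\<lambda>k. if k = m then 1 else 0)"

definition smul :: "complex \<Rightarrow> vec \<Rightarrow> vec" where
  "smul c f = (\<lambda>k. c * f k)"

definition wedge :: "int \<times> int \<Rightarrow> int \<times> int \<Rightarrow> int" where
  "wedge m k = fst m * snd k - snd m * fst k"

definition qbr_basis :: "complex \<Rightarrow> (int \<times> int) list \<Rightarrow> vec" where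
  "qbr_basis q is =
     smul ((1 / (q - inverse q)) *
           (\<Sum>\<sigma>\<in>{\<sigma>. \<sigma> permutes {..<length is}}.
              of_int (sign \<sigma>) *
              q powi (\<Sum>k<length is. \<Sum>s\<in>{k<..<length is}. wedge (is ! \<sigma> k) (is ! \<sigma> s))))
          (basisT (sum_list is))"

fun mlext :: "((int \<times> int) list \<Rightarrow> vec) \<Rightarrow> vec list \<Rightarrow> vec" where
  "mlext f [] = f []"
| "mlext f (v # vs) = (\<lambda>k. \<Sum>m\<in>{m. v m \<noteq> 0}. v m * mlext (\<lambda>ms. f (m # ms)) vs k)"

definition qbr :: "complex \<Rightarrow> vec list \<Rightarrow> vec" where
  "qbr q xs = mlext (qbr_basis q) xs"

definition sh_n_Lie :: "nat \<Rightarrow> (vec list \<Rightarrow> vec) \<Rightarrow> bool" where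
  "sh_n_Lie n br \<longleftrightarrow>
     (\<forall>xs. set xs \<subseteq> Vspace \<and> length xs = n \<longrightarrow> br xs \<in> Vspace) \<and>
     (\<forall>xs \<sigma>. set xs \<subseteq> Vspace \<and> length xs = n \<and> \<sigma> permutes {..<n} \<longrightarrow>
        br (map (\<lambda>k. xs ! \<sigma> k) [0..<n]) = smul (of_int (sign \<sigma>)) (br xs)) \<and>
     (\<forall>xs. set xs \<subseteq> Vspace \<and> length xs = 2 * n - 1 \<longrightarrow>
        (\<lambda>t. \<Sum>\<sigma>\<in>{\<sigma>. \<sigma> permutes {..<2 * n - 1} \<and>
                  (\<forall>i j. i < j \<and> j < n \<longrightarrow> \<sigma> i < \<sigma> j) \<and>
                  (\<forall>i j. n \<le> i \<and> i < j \<and> j < 2 * n - 1 \<longrightarrow> \<sigma> i < \<sigma> j)}.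
           of_int (sign \<sigma>) *
             br (br (map (\<lambda>k. xs ! \<sigma> k) [0..<n]) # map (\<lambda>k. xs ! \<sigma> k) [n..<2 * n - 1]) t)
        = (\<lambda>_. 0))"

end

(*
  On basis vectors, (q - q\<inverse>) [[T_i1, ..., T_in]] = A(i) T_(i1+...+in), where
  A(i) = \<Sum>\<pi> sgn \<pi> q^\<omega>(i\<circ>\<pi>) and \<omega>(l) = \<Sum>_(k<s) l_k \<wedge> l_s.  By multilinearity, closure and
  skew-symmetry are immediate and the sh-Jacobi identity reduces to an identity between these
  coefficients.  Every permutation of 2n-1 positions is uniquely a shuffle composed with a
  permutation preserving the two blocks, and the signed Jacobi terms are invariant under the
  latter, so the shuffle sum is a positive multiple of the sum over all of S_(2n-1).  Expanding both
  coefficients there, a permutation \<rho> of the outer arguments sending position j to the front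
  is absorbed: \<omega> is additive under collapsing a block to its sum, so the nested weight is the
  weight of a single permutation of the 2n-1 indices, composed with the rotation of the inner
  block past j indices, whose sign (-1)^(nj) is 1 because n is even.  Thus each \<rho> contributes
  (-1)^(\<rho>\<inverse>(0)) A, and these signs cancel in pairs for even n.
*)

theory Submission
  imports Defs
begin

section \<open>Wedge weights and the bracket on basis vectors\<close>

fun wedge_weight :: "(int \<times> int) list \<Rightarrow> int" where
  "wedge_weight [] = 0"
| "wedge_weight (x # xs) = wedge x (sum_list xs) + wedge_weight xs"

lemma wedge_add_left: "wedge (a + b) x = wedge a x + wedge b x"
  by (simp add: wedge_def algebra_simps)

lemma wedge_add_right: "wedge x (a + b) = wedge x a + wedge x b"
  by (simp add: wedge_def algebra_simps)

lemma wedge_zero_left [simp]: "wedge 0 x = 0"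
  by (simp add: wedge_def)

lemma wedge_zero_right [simp]: "wedge x 0 = 0"
  by (simp add: wedge_def)

lemma wedge_sum_left: "wedge (sum f A) x = (\<Sum>k\<in>A. wedge (f k) x)"
  by (induction A rule: infinite_finite_induct) (auto simp: wedge_add_left)

lemma wedge_weight_append:
  "wedge_weight (xs @ ys) = wedge_weight xs + wedge_weight ys + wedge (sum_list xs) (sum_list ys)"
  by (induction xs) (auto simp: wedge_add_right wedge_add_left)

lemma wedge_weight_contract:
  "wedge_weight (xs @ ys @ zs) = wedge_weight (xs @ [sum_list ys] @ zs) + wedge_weight ys"
  by (simp add: wedge_weight_append wedge_add_right wedge_add_left)

lemma sum_wedge_pairs_eq_wedge_weight:
  "(\<Sum>k<m. \<Sum>s\<in>{k<..<m}. wedge (h k) (h s)) = wedge_weight (map h [0..<m])"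
proof (induction m)
  case 0
  show ?case by simp
next
  case (Suc m)
  have "{k<..<Suc m} = insert m {k<..<m}" if "k < m" for k
    using that by auto
  moreover have "{m<..<Suc m} = {}"
    by auto
  ultimately have "(\<Sum>k<Suc m. \<Sum>s\<in>{k<..<Suc m}. wedge (h k) (h s))
      = (\<Sum>k<m. (\<Sum>s\<in>{k<..<m}. wedge (h k) (h s)) + wedge (h k) (h m))"
    by (simp add: add.commute)
  also have "\<dots> = wedge_weight (map h [0..<m]) + wedge (sum h {..<m}) (h m)"
    by (simp add: sum.distrib Suc wedge_sum_left)
  also have "\<dots> = wedge_weight (map h [0..<Suc m])"
    by (simp add: wedge_weight_append interv_sum_list_conv_sum_set_nat atLeast0LessThan)
  finally show ?case .
qed

definition alt_coeff :: "complex \<Rightarrow> (int \<times> int) list \<Rightarrow> complex" where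
  "alt_coeff q l = (\<Sum>\<pi> | \<pi> permutes {..<length l}.
      of_int (sign \<pi>) * q powi wedge_weight (permute_list \<pi> l))"

lemma qbr_basis_eq_alt_coeff:
  "qbr_basis q l = smul (1 / (q - inverse q) * alt_coeff q l) (basisT (sum_list l))"
  unfolding qbr_basis_def alt_coeff_def sum_wedge_pairs_eq_wedge_weight permute_list_def ..

lemma qbr_basis_apply:
  "qbr_basis q l k = 1 / (q - inverse q) * alt_coeff q l * (if k = sum_list l then 1 else 0)"
  unfolding qbr_basis_eq_alt_coeff smul_def basisT_def by simp

lemma sum_list_permute_list:
  fixes xs :: "'a::comm_monoid_add list"
  shows "\<pi> permutes {..<length xs} \<Longrightarrow> sum_list (permute_list \<pi> xs) = sum_list xs"
  by (simp flip: sum_mset_sum_list)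

lemma sign_compose_permutes:
  "\<sigma> permutes S \<Longrightarrow> \<tau> permutes S \<Longrightarrow> finite S \<Longrightarrow> sign (\<sigma> \<circ> \<tau>) = sign \<sigma> * sign \<tau>"
  by (simp add: permutes_imp_permutation sign_compose)

lemma alt_coeff_permute_list:
  assumes "\<pi> permutes {..<length l}"
  shows "alt_coeff q (permute_list \<pi> l) = of_int (sign \<pi>) * alt_coeff q l"
proof -
  let ?P = "{p. p permutes {..<length l}}"
  let ?w = "\<lambda>p. q powi wedge_weight (permute_list p l)"
  have "alt_coeff q (permute_list \<pi> l) = (\<Sum>p\<in>?P. of_int (sign p) * ?w (\<pi> \<circ> p))"
    unfolding alt_coeff_def by (intro sum.cong) (auto simp: permute_list_compose)
  also have "\<dots> = (\<Sum>p\<in>?P. of_int (sign (inv \<pi> \<circ> p)) * ?w (\<pi> \<circ> (inv \<pi> \<circ> p)))"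
    by (rule setum_permutations_compose_left[OF permutes_inv[OF assms]])
  also have "\<dots> = (\<Sum>p\<in>?P. of_int (sign \<pi>) * (of_int (sign p) * ?w p))"
  proof (rule sum.cong)
    fix p assume "p \<in> ?P"
    then have "sign (inv \<pi> \<circ> p) = sign \<pi> * sign p"
      using sign_compose_permutes[OF permutes_inv[OF assms]]
        sign_inverse[OF permutes_imp_permutation[OF finite_lessThan assms]]
      by simp
    moreover have "\<pi> \<circ> (inv \<pi> \<circ> p) = p"
      using permutes_inverses(1)[OF assms] by (auto simp: fun_eq_iff)
    ultimately show "of_int (sign (inv \<pi> \<circ> p)) * ?w (\<pi> \<circ> (inv \<pi> \<circ> p))
        = of_int (sign \<pi>) * (of_int (sign p) * ?w p)"
      by simp
  qed simp
  finally show ?thesis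
    by (simp add: alt_coeff_def sum_distrib_left)
qed

section \<open>Permutations of positions\<close>

definition shift_cycle :: "nat \<Rightarrow> nat \<Rightarrow> nat \<Rightarrow> nat" where
  "shift_cycle a m i = (if i = a then a + m else if a < i \<and> i \<le> a + m then i - 1 else i)"

lemma shift_cycle_Suc:
  "shift_cycle a (Suc m) = Transposition.transpose (a + m) (a + m + 1) \<circ> shift_cycle a m"
  by (auto simp: fun_eq_iff shift_cycle_def Transposition.transpose_def)

lemma shift_cycle_permutes_sign:
  "shift_cycle a m permutes {a..a + m} \<and> sign (shift_cycle a m) = (-1) ^ m"
proof (induction m)
  case 0
  have "shift_cycle a 0 = id"
    by (auto simp: fun_eq_iff shift_cycle_def)
  then show ?case
    by (simp add: permutes_id sign_id del: id_apply)
next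
  case (Suc m)
  have t: "Transposition.transpose (a + m) (a + m + 1) permutes {a..a + Suc m}"
    by (rule permutes_swap_id) auto
  have c: "shift_cycle a m permutes {a..a + Suc m}"
    using Suc.IH by (auto intro: permutes_subset)
  have "sign (shift_cycle a (Suc m)) = (-1) ^ Suc m"
    unfolding shift_cycle_Suc sign_compose_permutes[OF t c finite_atLeastAtMost]
    using Suc.IH by (simp add: sign_swap_id)
  moreover have "shift_cycle a (Suc m) permutes {a..a + Suc m}"
    unfolding shift_cycle_Suc by (rule permutes_compose[OF c t])
  ultimately show ?case
    by simp
qed

definition prefix_rotation :: "nat \<Rightarrow> nat \<Rightarrow> nat \<Rightarrow> nat" where
  "prefix_rotation n j i = (if i < j then n + i else if i < j + n then i - j else i)"

lemma prefix_rotation_Suc: "prefix_rotation n (Suc j) = prefix_rotation n j \<circ> shift_cycle j n"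
  by (auto simp: fun_eq_iff prefix_rotation_def shift_cycle_def)

lemma prefix_rotation_permutes_sign:
  "prefix_rotation n j permutes {..<j + n} \<and> sign (prefix_rotation n j) = (-1) ^ (n * j)"
proof (induction j)
  case 0
  have "prefix_rotation n 0 = id"
    by (auto simp: fun_eq_iff prefix_rotation_def)
  then show ?case
    by (simp add: permutes_id sign_id del: id_apply)
next
  case (Suc j)
  have c: "shift_cycle j n permutes {..<Suc j + n}"
    using shift_cycle_permutes_sign[of j n] by (auto intro: permutes_subset)
  have r: "prefix_rotation n j permutes {..<Suc j + n}"
    using Suc.IH by (auto intro: permutes_subset)
  have "sign (prefix_rotation n (Suc j)) = (-1) ^ (n * Suc j)"
    unfolding prefix_rotation_Suc sign_compose_permutes[OF r c finite_lessThan]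
    using Suc.IH shift_cycle_permutes_sign[of j n] by (simp add: power_add)
  moreover have "prefix_rotation n (Suc j) permutes {..<Suc j + n}"
    unfolding prefix_rotation_Suc by (rule permutes_compose[OF c r])
  ultimately show ?case
    by simp
qed

lemma permute_list_prefix_rotation:
  assumes "n + j \<le> length xs"
  shows "permute_list (prefix_rotation n j) xs = take j (drop n xs) @ take n xs @ drop (n + j) xs"
  using assms by (intro nth_equalityI) (auto simp: permute_list_def prefix_rotation_def nth_append)

definition shift_perm :: "nat \<Rightarrow> (nat \<Rightarrow> nat) \<Rightarrow> nat \<Rightarrow> nat" where
  "shift_perm d p x = (if x < d then x else p (x - d) + d)"

lemma image_plus_nat_iff: "x \<in> (+) (d::nat) ` S \<longleftrightarrow> d \<le> x \<and> x - d \<in> S"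
  by (auto simp: image_iff) (metis le_add_diff_inverse)

lemma shift_perm_permutes_sign:
  assumes "p permutes S" "finite S"
  shows "shift_perm d p permutes ((+) d ` S)" and "sign (shift_perm d p) = sign p"
proof -
  let ?p' = "\<lambda>x. if x \<in> (+) d ` S then d + p (x - d) else x"
  interpret permutes_bij_finite p S "(+) d ` S" "(+) d" "\<lambda>x. x - d" ?p'
    using assms by unfold_locales (auto simp: bij_betw_def)
  have "shift_perm d p = ?p'"
    using permutes_not_in[OF assms(1)] by (auto simp: fun_eq_iff shift_perm_def image_plus_nat_iff)
  then show "shift_perm d p permutes ((+) d ` S)" and "sign (shift_perm d p) = sign p"
    using permutes_p' sign_p' by simp_all
qed

lemma shift_perm_unshift:
  assumes "p permutes T" "T \<subseteq> {d..}"
  obtains b where "b permutes (\<lambda>x. x - d) ` T" and "p = shift_perm d b"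
proof -
  let ?b = "\<lambda>x. if x \<in> (\<lambda>x. x - d) ` T then p (d + x) - d else x"
  have inj: "inj_on (\<lambda>x. x - d) {d..}"
    by (auto intro: inj_on_diff_nat)
  interpret permutes_bij p T "(\<lambda>x. x - d) ` T" "\<lambda>x. x - d" "(+) d" ?b
    using assms inj_on_subset[OF inj assms(2)] by unfold_locales (auto simp: bij_betw_def)
  have "p x = shift_perm d ?b x" for x
  proof (cases "x \<in> T")
    case True
    then show ?thesis
      using assms permutes_in_image[OF assms(1)] by (force simp: shift_perm_def)
  next
    case False
    then have "x - d \<notin> (\<lambda>x. x - d) ` T \<or> x < d"
      using inj_on_image_mem_iff[OF inj _ assms(2), of x] by force
    then show ?thesis
      using False permutes_not_in[OF assms(1)] by (auto simp: shift_perm_def)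
  qed
  then show ?thesis
    using that permutes_p' by blast
qed

lemma sum_permutations_neg_one_pow_inv_zero:
  assumes "even n" "0 < n"
  shows "(\<Sum>\<rho> | \<rho> permutes {..<n}. (-1::complex) ^ inv \<rho> 0) = 0"
proof -
  let ?P = "{\<rho>. \<rho> permutes {..<n}}"
  define r where "r v = (if v < n then n - 1 - v else v)" for v
  have "bij_betw r {..<n} {..<n}"
    by (rule bij_betw_byWitness[where f' = r]) (auto simp: r_def)
  then have r: "r permutes {..<n}"
    by (rule bij_imp_permutes) (simp add: r_def)
  \<comment> \<open>the reversal of an even number of positions flips the parity of every position\<close>
  have flip: "(-1::complex) ^ r v = - ((-1) ^ v)" if "v < n" for v
  proof -
    have "even v \<longleftrightarrow> odd (n - 1 - v)"
      using assms that by presburger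
    then show ?thesis
      using that by (cases "even v") (simp_all add: r_def)
  qed
  have "(\<Sum>\<rho>\<in>?P. (-1::complex) ^ \<rho> 0) = (\<Sum>\<rho>\<in>?P. (-1) ^ (r \<circ> \<rho>) 0)"
    by (rule setum_permutations_compose_left[OF r])
  also have "\<dots> = - (\<Sum>\<rho>\<in>?P. (-1::complex) ^ \<rho> 0)"
    using assms flip permutes_in_image[of _ "{..<n}" 0]
    by (auto simp: sum_negf[symmetric] intro!: sum.cong)
  finally show ?thesis
    using sum_permutations_inverse[of "\<lambda>\<rho>. (-1::complex) ^ \<rho> 0" "{..<n}"] by simp
qed

section \<open>The alternating sum over all permutations\<close>

text \<open>The basis indices of the outer bracket in [[T_M0, ..., T_M(n-1)], T_Mn, ...].\<close>

definition outer_indices :: "nat \<Rightarrow> (int \<times> int) list \<Rightarrow> (int \<times> int) list" where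
  "outer_indices n M = sum_list (take n M) # drop n M"

lemma length_outer_indices [simp]: "length (outer_indices n M) = Suc (length M - n)"
  by (simp add: outer_indices_def)

lemma permute_list_low_block:
  assumes "a permutes {..<n}" "n \<le> length M"
  shows "take n (permute_list a M) = permute_list a (take n M)"
    and "outer_indices n (permute_list a M) = outer_indices n M"
proof -
  have a: "k < n \<Longrightarrow> a k < n" "k \<ge> n \<Longrightarrow> a k = k" for k
    using permutes_in_image[OF assms(1)] permutes_not_in[OF assms(1)] by auto
  show take: "take n (permute_list a M) = permute_list a (take n M)"
    using assms(2) a by (intro nth_equalityI) (auto simp: permute_list_def)
  have "drop n (permute_list a M) = drop n M"
    using assms(2) a by (intro nth_equalityI) (auto simp: permute_list_def)
  moreover have "a permutes {..<length (take n M)}"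
    using assms by (simp add: min_absorb1)
  ultimately show "outer_indices n (permute_list a M) = outer_indices n M"
    by (simp add: outer_indices_def take sum_list_permute_list)
qed

lemma shift_perm_high_block:
  assumes "b permutes {1..<Suc m}" "0 < n"
  shows "shift_perm (n - 1) b permutes {..<n + m}" and "sign (shift_perm (n - 1) b) = sign b"
proof -
  have "shift_perm (n - 1) b permutes (+) (n - 1) ` {1..<Suc m}"
    by (rule shift_perm_permutes_sign(1)[OF assms(1) finite_atLeastLessThan])
  also have "(+) (n - 1) ` {1..<Suc m} = {n..<n + m}"
    unfolding image_add_atLeastLessThan using assms(2) by (simp add: add.commute)
  finally show "shift_perm (n - 1) b permutes {..<n + m}"
    by (rule permutes_subset) auto
  show "sign (shift_perm (n - 1) b) = sign b"
    by (rule shift_perm_permutes_sign(2)[OF assms(1) finite_atLeastLessThan])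
qed

lemma permute_list_high_block:
  assumes "b permutes {1..<Suc m}" "length M = n + m" "0 < n"
  shows "take n (permute_list (shift_perm (n - 1) b) M) = take n M"
    and "outer_indices n (permute_list (shift_perm (n - 1) b) M)
         = permute_list b (outer_indices n M)"
proof -
  have b0: "b 0 = 0"
    by (rule permutes_not_in[OF assms(1)]) simp
  have b_lt: "b k < Suc m" if "k < Suc m" for k
    using that b0 permutes_in_image[OF assms(1), of k] by (cases "k = 0") auto
  have b_pos: "0 < b k" if "0 < k" for k
    using that b0 permutes_inj[OF assms(1)] by (metis injD neq0_conv)
  have low: "shift_perm (n - 1) b i = i" if "i < n" for i
    using that b0 by (auto simp: shift_perm_def)
  have high: "shift_perm (n - 1) b (n + k) = n + (b (Suc k) - 1)" if "k < m" for k
    using assms(3) b_pos[of "Suc k"] by (auto simp: shift_perm_def Suc_diff_le)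
  show take: "take n (permute_list (shift_perm (n - 1) b) M) = take n M"
    using assms(2) low by (intro nth_equalityI) (auto simp: permute_list_def)
  show "outer_indices n (permute_list (shift_perm (n - 1) b) M)
      = permute_list b (outer_indices n M)"
  proof (rule nth_equalityI)
    fix i
    assume "i < length (outer_indices n (permute_list (shift_perm (n - 1) b) M))"
    then have i: "i < Suc m"
      using assms(2) by simp
    show "outer_indices n (permute_list (shift_perm (n - 1) b) M) ! i
        = permute_list b (outer_indices n M) ! i"
    proof (cases i)
      case 0
      then show ?thesis
        unfolding outer_indices_def take using assms(2) b0 by (simp add: permute_list_def del: upt_Suc)
    next
      case (Suc k)
      then have "0 < b i" "b i < Suc m"
        using b_pos b_lt i by auto
      then show ?thesis
        using Suc i assms(2) high[of k]
        by (auto simp: outer_indices_def permute_list_def nth_Cons split: nat.split simp del: upt_Suc)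
    qed
  qed (use assms(2) in simp)
qed

lemma wedge_weight_prefix_rotation:
  assumes "n + j \<le> length M"
  shows "wedge_weight (take n M) + wedge_weight (permute_list (prefix_rotation 1 j) (outer_indices n M))
       = wedge_weight (permute_list (prefix_rotation n j) M)"
proof -
  have "permute_list (prefix_rotation 1 j) (outer_indices n M)
      = take j (drop n M) @ [sum_list (take n M)] @ drop j (drop n M)"
    using assms by (simp add: outer_indices_def permute_list_prefix_rotation)
  moreover have "permute_list (prefix_rotation n j) M
      = take j (drop n M) @ take n M @ drop j (drop n M)"
    using assms by (simp add: permute_list_prefix_rotation add.commute)
  ultimately show ?thesis
    by (simp add: wedge_weight_contract)
qed

definition split_weight_sum :: "complex \<Rightarrow> nat \<Rightarrow> (int \<times> int) list \<Rightarrow> (nat \<Rightarrow> nat) \<Rightarrow> complex" where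
  "split_weight_sum q n L \<rho> = (\<Sum>\<tau> | \<tau> permutes {..<length L}. of_int (sign \<tau>) *
     q powi (wedge_weight (take n (permute_list \<tau> L))
             + wedge_weight (permute_list \<rho> (outer_indices n (permute_list \<tau> L)))))"

lemma split_weight_sum_compose_head_fixing:
  assumes "\<mu> permutes {1..<Suc m}" "R permutes {..<Suc m}" "length L = n + m" "0 < n"
  shows "split_weight_sum q n L (\<mu> \<circ> R) = of_int (sign \<mu>) * split_weight_sum q n L R"
proof -
  let ?P = "{\<tau>. \<tau> permutes {..<length L}}"
  define s where "s = shift_perm (n - 1) \<mu>"
  let ?f = "\<lambda>\<tau>. q powi (wedge_weight (take n (permute_list \<tau> L))
                    + wedge_weight (permute_list R (outer_indices n (permute_list \<tau> L))))"
  have s: "s permutes {..<length L}" "sign s = sign \<mu>"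
    using shift_perm_high_block[OF assms(1,4)] assms(3) by (simp_all add: s_def)
  have shifted: "permute_list (\<mu> \<circ> R) (outer_indices n (permute_list \<tau> L))
      = permute_list R (outer_indices n (permute_list (\<tau> \<circ> s) L))"
    "take n (permute_list \<tau> L) = take n (permute_list (\<tau> \<circ> s) L)" for \<tau>
    using permute_list_high_block[OF assms(1), of "permute_list \<tau> L" n, folded s_def] assms(2-4) s(1)
    by (simp_all add: permute_list_compose)
  have "split_weight_sum q n L R = (\<Sum>\<tau>\<in>?P. of_int (sign (\<tau> \<circ> s)) * ?f (\<tau> \<circ> s))"
    unfolding split_weight_sum_def by (rule sum_permutations_compose_right[OF s(1)])
  also have "\<dots> = of_int (sign \<mu>) * split_weight_sum q n L (\<mu> \<circ> R)"
    unfolding split_weight_sum_def sum_distrib_left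
    by (intro sum.cong) (auto simp: sign_compose_permutes[OF _ s(1)] s(2) shifted[symmetric])
  finally show ?thesis
    by (simp flip: of_int_mult)
qed

lemma split_weight_sum_prefix_rotation:
  assumes "even n" "n + j \<le> length L"
  shows "split_weight_sum q n L (prefix_rotation 1 j) = alt_coeff q L"
proof -
  let ?P = "{\<tau>. \<tau> permutes {..<length L}}"
  define T where "T = prefix_rotation n j"
  have T: "T permutes {..<length L}" "sign T = 1"
    using prefix_rotation_permutes_sign[of n j] assms unfolding T_def
    by (auto intro: permutes_subset simp: power_mult)
  have "split_weight_sum q n L (prefix_rotation 1 j)
      = (\<Sum>\<tau>\<in>?P. of_int (sign (\<tau> \<circ> T)) * q powi wedge_weight (permute_list (\<tau> \<circ> T) L))"
    unfolding split_weight_sum_def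
    using assms(2) wedge_weight_prefix_rotation[of n j "permute_list _ L", folded T_def]
    by (intro sum.cong) (auto simp: sign_compose_permutes[OF _ T(1)] T permute_list_compose)
  also have "\<dots> = alt_coeff q L"
    unfolding alt_coeff_def by (rule sum_permutations_compose_right[OF T(1), symmetric])
  finally show ?thesis .
qed

lemma sign_mult_split_weight_sum:
  assumes "even n" "0 < n" "\<rho> permutes {..<n}" "length L = 2 * n - 1"
  shows "of_int (sign \<rho>) * split_weight_sum q n L \<rho> = (-1) ^ inv \<rho> 0 * alt_coeff q L"
proof -
  \<comment> \<open>\<rho> = \<mu> \<circ> R, where R moves position j = \<rho>\<inverse>(0) to the front and \<mu> fixes the head\<close>
  define j where "j = inv \<rho> 0"
  define R where "R = prefix_rotation 1 j"
  define \<mu> where "\<mu> = \<rho> \<circ> inv R"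
  have j: "j < n" "\<rho> j = 0"
    using permutes_in_image[OF permutes_inv[OF assms(3)]] permutes_inverses(1)[OF assms(3)] assms(2)
    by (auto simp: j_def)
  have R: "R permutes {..<n}" "sign R = (-1) ^ j" "R j = 0"
    using prefix_rotation_permutes_sign[of 1 j] j(1)
    by (auto intro: permutes_subset simp: R_def prefix_rotation_def)
  have "inv R 0 = j"
    using permutes_inv_eq[OF R(1)] R(3) by simp
  then have \<mu>: "\<mu> permutes {..<n}" "\<mu> 0 = 0" "\<rho> = \<mu> \<circ> R"
    using permutes_compose[OF permutes_inv[OF R(1)] assms(3)] j(2) permutes_inverses(2)[OF R(1)]
    by (auto simp: \<mu>_def fun_eq_iff)
  have \<mu>1: "\<mu> permutes {1..<Suc (n - 1)}"
    using \<mu>(2) assms(2) by (intro permutes_superset[OF \<mu>(1)]) (auto simp: not_less_eq_eq)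
  have "sign \<rho> = sign \<mu> * sign R"
    using sign_compose_permutes[OF \<mu>(1) R(1)] \<mu>(3) by simp
  moreover have "split_weight_sum q n L \<rho> = of_int (sign \<mu>) * alt_coeff q L"
    using split_weight_sum_compose_head_fixing[OF \<mu>1, of R L n q] R(1) assms j(1)
      split_weight_sum_prefix_rotation[OF assms(1), of j L] \<mu>(3)
    by (simp add: R_def)
  ultimately have "of_int (sign \<rho>) * split_weight_sum q n L \<rho>
      = of_int (sign \<mu> * sign \<mu> * sign R) * alt_coeff q L"
    by (simp only: of_int_mult mult_ac)
  then show ?thesis
    using R(2) by (simp add: j_def)
qed

definition jacobi_coeff :: "complex \<Rightarrow> nat \<Rightarrow> (int \<times> int) list \<Rightarrow> complex" where
  "jacobi_coeff q n M = alt_coeff q (take n M) * alt_coeff q (outer_indices n M)"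

lemma alt_sum_inner_weight_outer_coeff_eq_zero:
  assumes "even n" "0 < n" "q \<noteq> 0" "length L = 2 * n - 1"
  shows "(\<Sum>\<tau> | \<tau> permutes {..<length L}. of_int (sign \<tau>) *
           q powi wedge_weight (take n (permute_list \<tau> L)) *
           alt_coeff q (outer_indices n (permute_list \<tau> L))) = 0"
    (is "(\<Sum>\<tau>\<in>?P. _) = 0")
proof -
  let ?Pn = "{\<rho>. \<rho> permutes {..<n}}"
  have len: "length (outer_indices n (permute_list \<tau> L)) = n" for \<tau>
    using assms(2,4) by simp
  have "(\<Sum>\<tau>\<in>?P. of_int (sign \<tau>) * q powi wedge_weight (take n (permute_list \<tau> L)) *
           alt_coeff q (outer_indices n (permute_list \<tau> L)))
      = (\<Sum>\<tau>\<in>?P. \<Sum>\<rho>\<in>?Pn. of_int (sign \<rho>) * (of_int (sign \<tau>) *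
           q powi (wedge_weight (take n (permute_list \<tau> L))
                   + wedge_weight (permute_list \<rho> (outer_indices n (permute_list \<tau> L))))))"
    unfolding alt_coeff_def len
    by (simp add: sum_distrib_left power_int_add assms(3) mult_ac)
  also have "\<dots> = (\<Sum>\<rho>\<in>?Pn. of_int (sign \<rho>) * split_weight_sum q n L \<rho>)"
    unfolding split_weight_sum_def sum_distrib_left by (rule sum.swap)
  also have "\<dots> = (\<Sum>\<rho>\<in>?Pn. (-1) ^ inv \<rho> 0) * alt_coeff q L"
    unfolding sum_distrib_right using sign_mult_split_weight_sum[OF assms(1,2) _ assms(4)]
    by (intro sum.cong) auto
  finally show ?thesis
    using sum_permutations_neg_one_pow_inv_zero[OF assms(1,2)] by simp
qed

lemma alt_sum_jacobi_coeff_eq_zero: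
  assumes "even n" "0 < n" "q \<noteq> 0" "length L = 2 * n - 1"
  shows "(\<Sum>\<tau> | \<tau> permutes {..<length L}. of_int (sign \<tau>) * jacobi_coeff q n (permute_list \<tau> L)) = 0"
proof -
  let ?P = "{\<tau>. \<tau> permutes {..<length L}}"
  let ?Pn = "{\<pi>. \<pi> permutes {..<n}}"
  define X where "X \<tau> = q powi wedge_weight (take n (permute_list \<tau> L))" for \<tau>
  define Y where "Y \<tau> = alt_coeff q (outer_indices n (permute_list \<tau> L))" for \<tau>
  have nL: "n \<le> length L"
    using assms(2,4) by simp
  have \<pi>L: "\<pi> permutes {..<length L}" if "\<pi> \<in> ?Pn" for \<pi>
    using that nL by (auto intro: permutes_subset)
  have inner: "permute_list \<pi> (take n (permute_list \<tau> L)) = take n (permute_list (\<tau> \<circ> \<pi>) L)"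
    and outer: "Y (\<tau> \<circ> \<pi>) = Y \<tau>" if "\<pi> \<in> ?Pn" for \<tau> \<pi>
    using permute_list_low_block[of \<pi> n "permute_list \<tau> L"] that nL \<pi>L[OF that]
    by (simp_all add: Y_def permute_list_compose)
  have "alt_coeff q (take n (permute_list \<tau> L)) = (\<Sum>\<pi>\<in>?Pn. of_int (sign \<pi>) * X (\<tau> \<circ> \<pi>))" for \<tau>
    using nL unfolding alt_coeff_def X_def by (simp add: inner min_absorb2)
  then have "(\<Sum>\<tau>\<in>?P. of_int (sign \<tau>) * jacobi_coeff q n (permute_list \<tau> L))
      = (\<Sum>\<tau>\<in>?P. \<Sum>\<pi>\<in>?Pn. of_int (sign \<tau>) * of_int (sign \<pi>) * X (\<tau> \<circ> \<pi>) * Y \<tau>)"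
    unfolding jacobi_coeff_def Y_def[symmetric] by (simp add: sum_distrib_left sum_distrib_right mult_ac)
  also have "\<dots> = (\<Sum>\<pi>\<in>?Pn. \<Sum>\<tau>\<in>?P. of_int (sign (\<tau> \<circ> \<pi>)) * X (\<tau> \<circ> \<pi>) * Y (\<tau> \<circ> \<pi>))"
    using \<pi>L by (subst sum.swap) (auto intro!: sum.cong simp: sign_compose_permutes outer)
  also have "\<dots> = (\<Sum>\<pi>\<in>?Pn. \<Sum>\<tau>\<in>?P. of_int (sign \<tau>) * X \<tau> * Y \<tau>)"
    using \<pi>L by (intro sum.cong refl sum_permutations_compose_right[symmetric]) auto
  also have "\<dots> = 0"
    using alt_sum_inner_weight_outer_coeff_eq_zero[OF assms] by (simp add: X_def Y_def)
  finally show ?thesis .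
qed

section \<open>Reduction of shuffle sums to full sums\<close>

definition shuffles :: "nat \<Rightarrow> nat \<Rightarrow> (nat \<Rightarrow> nat) set" where
  "shuffles n N = {\<sigma>. \<sigma> permutes {..<N} \<and>
                     (\<forall>i j. i < j \<and> j < n \<longrightarrow> \<sigma> i < \<sigma> j) \<and>
                     (\<forall>i j. n \<le> i \<and> i < j \<and> j < N \<longrightarrow> \<sigma> i < \<sigma> j)}"

definition block_perms :: "nat \<Rightarrow> nat \<Rightarrow> (nat \<Rightarrow> nat) set" where
  "block_perms n N = {\<kappa>. \<kappa> permutes {..<N} \<and> \<kappa> ` {..<n} \<subseteq> {..<n}}"

definition shuffle_of_set :: "nat \<Rightarrow> nat \<Rightarrow> nat set \<Rightarrow> nat \<Rightarrow> nat" where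
  "shuffle_of_set n N I i =
     (if i < n then sorted_list_of_set I ! i
      else if i < N then sorted_list_of_set ({..<N} - I) ! (i - n) else i)"

lemma sorted_list_of_set_image_strict_mono:
  assumes "\<And>i j. a \<le> i \<Longrightarrow> i < j \<Longrightarrow> j < b \<Longrightarrow> \<sigma> i < \<sigma> j"
  shows "sorted_list_of_set (\<sigma> ` {a..<b}) = map \<sigma> [a..<b]"
proof -
  have sorted: "sorted_wrt (<) (map \<sigma> [a..<b])"
    using assms by (auto simp: sorted_wrt_iff_nth_less)
  then have "length (map \<sigma> [a..<b]) = card (\<sigma> ` {a..<b})"
    by (metis distinct_card set_map set_upt strict_sorted_iff)
  with sorted show ?thesis
    by (subst sorted_list_of_set_unique[symmetric]) auto
qed

lemma shuffle_of_set_image: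
  assumes "\<sigma> \<in> shuffles n N" "n \<le> N"
  shows "shuffle_of_set n N (\<sigma> ` {..<n}) = \<sigma>"
proof
  fix i
  have p: "\<sigma> permutes {..<N}"
    and mono: "\<And>i j. i < j \<Longrightarrow> j < n \<Longrightarrow> \<sigma> i < \<sigma> j"
      "\<And>i j. n \<le> i \<Longrightarrow> i < j \<Longrightarrow> j < N \<Longrightarrow> \<sigma> i < \<sigma> j"
    using assms(1) by (auto simp: shuffles_def)
  have "sorted_list_of_set (\<sigma> ` {..<n}) = map \<sigma> [0..<n]"
    using sorted_list_of_set_image_strict_mono[of 0 n \<sigma>] mono(1) by (simp add: atLeast0LessThan)
  moreover have "sorted_list_of_set (\<sigma> ` {n..<N}) = map \<sigma> [n..<N]"
    using sorted_list_of_set_image_strict_mono[of n N \<sigma>] mono(2) by simp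
  moreover have "{..<N} - \<sigma> ` {..<n} = \<sigma> ` {n..<N}"
    using permutes_image[OF p] image_set_diff[OF permutes_inj[OF p], of "{..<N}" "{..<n}"]
    by (simp add: lessThan_minus_lessThan)
  ultimately show "shuffle_of_set n N (\<sigma> ` {..<n}) i = \<sigma> i"
    using permutes_not_in[OF p, of i] assms(2) by (auto simp: shuffle_of_set_def)
qed

lemma shuffle_of_set_in_shuffles:
  assumes "I \<subseteq> {..<N}" "card I = n" "n \<le> N"
  shows "shuffle_of_set n N I \<in> shuffles n N" and "shuffle_of_set n N I ` {..<n} = I"
proof -
  define s where "s = sorted_list_of_set I"
  define c where "c = sorted_list_of_set ({..<N} - I)"
  have fin: "finite I"
    using assms(1) finite_subset by blast
  have s: "sorted_wrt (<) s" "set s = I" "length s = n"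
    using assms(2) fin by (simp_all add: s_def)
  have c: "sorted_wrt (<) c" "set c = {..<N} - I" "length c = N - n"
    using assms fin by (simp_all add: c_def card_Diff_subset)
  have f: "shuffle_of_set n N I i = (s @ c) ! i" if "i < N" for i
    using that s(3) by (simp add: shuffle_of_set_def nth_append s_def c_def)
  have "distinct (s @ c)"
    using strict_sorted_iff s(1,2) c(1,2) by (simp add: distinct_append) blast
  moreover have "set (s @ c) = {..<N}" "length (s @ c) = N"
    using s(2,3) c(2,3) assms(1,3) by auto
  ultimately have "bij_betw ((!) (s @ c)) {..<N} {..<N}"
    by (intro bij_betw_nth) simp_all
  then have "bij_betw (shuffle_of_set n N I) {..<N} {..<N}"
    using bij_betw_cong[of "{..<N}" "shuffle_of_set n N I" "(!) (s @ c)" "{..<N}"] f by simp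
  moreover have "\<forall>i j. i < j \<and> j < n \<longrightarrow> shuffle_of_set n N I i < shuffle_of_set n N I j"
    using sorted_wrt_nth_less[OF s(1)] s(3) by (simp add: shuffle_of_set_def s_def)
  moreover have "\<forall>i j. n \<le> i \<and> i < j \<and> j < N \<longrightarrow> shuffle_of_set n N I i < shuffle_of_set n N I j"
  proof (intro allI impI)
    fix i j
    assume "n \<le> i \<and> i < j \<and> j < N"
    then show "shuffle_of_set n N I i < shuffle_of_set n N I j"
      using sorted_wrt_nth_less[OF c(1), of "i - n" "j - n"] c(3) by (auto simp: shuffle_of_set_def c_def)
  qed
  moreover have "shuffle_of_set n N I i = i" if "i \<notin> {..<N}" for i
    using that assms(3) by (simp add: shuffle_of_set_def)
  ultimately show "shuffle_of_set n N I \<in> shuffles n N"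
    unfolding shuffles_def by (blast intro: bij_imp_permutes)
  have "bij_betw ((!) s) {..<n} I"
    using s by (intro bij_betw_nth) (auto simp: strict_sorted_iff)
  then show "shuffle_of_set n N I ` {..<n} = I"
    by (simp add: bij_betw_def shuffle_of_set_def s_def)
qed

lemma block_perms_image:
  assumes "\<kappa> \<in> block_perms n N"
  shows "\<kappa> ` {..<n} = {..<n}"
  using assms endo_inj_surj[of "{..<n}" \<kappa>] permutes_inj[of \<kappa> "{..<N}"]
  by (auto simp: block_perms_def inj_on_subset)

lemma bij_betw_shuffles_times_block_perms:
  assumes "n \<le> N"
  shows "bij_betw (\<lambda>(\<sigma>, \<kappa>). \<sigma> \<circ> \<kappa>) (shuffles n N \<times> block_perms n N) {\<tau>. \<tau> permutes {..<N}}"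
proof -
  define sh where "sh \<tau> = shuffle_of_set n N (\<tau> ` {..<n})" for \<tau>
  have sh: "sh \<tau> \<in> shuffles n N" "sh \<tau> ` {..<n} = \<tau> ` {..<n}" if "\<tau> permutes {..<N}" for \<tau>
  proof -
    have "\<tau> ` {..<n} \<subseteq> {..<N}"
      using permutes_image[OF that] assms by (metis image_mono lessThan_subset_iff)
    moreover have "card (\<tau> ` {..<n}) = n"
      using card_image[OF inj_on_subset[OF permutes_inj[OF that] subset_UNIV]] by simp
    ultimately show "sh \<tau> \<in> shuffles n N" "sh \<tau> ` {..<n} = \<tau> ` {..<n}"
      using shuffle_of_set_in_shuffles[OF _ _ assms] by (simp_all add: sh_def)
  qed
  have sh_perm: "sh \<tau> permutes {..<N}" if "\<tau> permutes {..<N}" for \<tau>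
    using sh(1)[OF that] by (simp add: shuffles_def)
  have rest: "inv (sh \<tau>) \<circ> \<tau> \<in> block_perms n N" if "\<tau> permutes {..<N}" for \<tau>
  proof -
    have "inv (sh \<tau>) ` \<tau> ` {..<n} = {..<n}"
      unfolding sh(2)[OF that, symmetric] image_comp permutes_inv_o(2)[OF sh_perm[OF that]]
      by simp
    then show ?thesis
      using permutes_compose[OF that permutes_inv[OF sh_perm[OF that]]]
      by (simp add: block_perms_def image_comp)
  qed
  have sh_compose: "sh (\<sigma> \<circ> \<kappa>) = \<sigma>" if "\<sigma> \<in> shuffles n N" "\<kappa> \<in> block_perms n N" for \<sigma> \<kappa>
    unfolding sh_def image_comp[symmetric] block_perms_image[OF that(2)]
    by (rule shuffle_of_set_image[OF that(1) assms])
  let ?f = "\<lambda>(\<sigma>, \<kappa>). \<sigma> \<circ> \<kappa>"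
  let ?g = "\<lambda>\<tau>. (sh \<tau>, inv (sh \<tau>) \<circ> \<tau>)"
  show ?thesis
  proof (rule bij_betw_byWitness[where f' = ?g])
    show "\<forall>x\<in>shuffles n N \<times> block_perms n N. ?g (?f x) = x"
      using sh_compose by (auto simp: shuffles_def o_assoc permutes_inv_o(2)[of _ "{..<N}"])
    show "\<forall>\<tau>\<in>{\<tau>. \<tau> permutes {..<N}}. ?f (?g \<tau>) = \<tau>"
      using sh_perm by (auto simp: o_assoc permutes_inv_o(1)[of _ "{..<N}"])
    show "?f ` (shuffles n N \<times> block_perms n N) \<subseteq> {\<tau>. \<tau> permutes {..<N}}"
      by (auto simp: shuffles_def block_perms_def intro: permutes_compose)
    show "?g ` {\<tau>. \<tau> permutes {..<N}} \<subseteq> shuffles n N \<times> block_perms n N"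
      using sh(1) rest by auto
  qed
qed

lemma sum_permutations_eq_card_block_perms_mult_sum_shuffles:
  fixes G :: "(nat \<Rightarrow> nat) \<Rightarrow> 'a::comm_ring_1"
  assumes "n \<le> N"
    and invariant: "\<And>\<tau> \<kappa>. \<tau> permutes {..<N} \<Longrightarrow> \<kappa> \<in> block_perms n N \<Longrightarrow> G (\<tau> \<circ> \<kappa>) = G \<tau>"
  shows "(\<Sum>\<tau> | \<tau> permutes {..<N}. G \<tau>) = of_nat (card (block_perms n N)) * (\<Sum>\<sigma>\<in>shuffles n N. G \<sigma>)"
proof -
  have "(\<Sum>\<tau> | \<tau> permutes {..<N}. G \<tau>) = (\<Sum>(\<sigma>, \<kappa>)\<in>shuffles n N \<times> block_perms n N. G (\<sigma> \<circ> \<kappa>))"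
    using sum.reindex_bij_betw[OF bij_betw_shuffles_times_block_perms[OF assms(1)], of G]
    by (simp add: case_prod_beta')
  also have "\<dots> = (\<Sum>(\<sigma>, \<kappa>)\<in>shuffles n N \<times> block_perms n N. G \<sigma>)"
    using invariant by (intro sum.cong) (auto simp: shuffles_def)
  also have "\<dots> = of_nat (card (block_perms n N)) * (\<Sum>\<sigma>\<in>shuffles n N. G \<sigma>)"
    by (simp add: sum.cartesian_product[symmetric] sum_distrib_right mult.commute)
  finally show ?thesis .
qed

lemma card_block_perms_pos: "0 < card (block_perms n N)"
proof -
  have "block_perms n N \<subseteq> {\<kappa>. \<kappa> permutes {..<N}}"
    by (auto simp: block_perms_def)
  then have "finite (block_perms n N)"
    using finite_permutations[of "{..<N}"] finite_subset by auto
  moreover have "id \<in> block_perms n N"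
    by (simp add: block_perms_def permutes_id)
  ultimately show ?thesis
    by (auto simp: card_gt_0_iff)
qed

lemma block_perms_decompose:
  assumes "\<kappa> \<in> block_perms n (n + m)" "0 < n"
  obtains a b where "a permutes {..<n}" "b permutes {1..<Suc m}" "\<kappa> = a \<circ> shift_perm (n - 1) b"
proof -
  have p: "\<kappa> permutes {..<n + m}" and low: "\<kappa> ` {..<n} = {..<n}"
    using assms(1) block_perms_image[OF assms(1)] by (auto simp: block_perms_def)
  have "{n..<n + m} = {..<n + m} - {..<n}"
    by auto
  then have high: "\<kappa> ` {n..<n + m} = {n..<n + m}"
    by (simp only: image_set_diff[OF permutes_inj[OF p]] permutes_image[OF p] low)
  define a where "a i = (if i < n then \<kappa> i else i)" for i
  define c where "c i = (if i < n then i else \<kappa> i)" for i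
  have "bij_betw \<kappa> {..<n} {..<n}"
    using low permutes_inj_on[OF p] by (simp add: bij_betw_def)
  then have "bij_betw a {..<n} {..<n}"
    by (rule bij_betw_cong[THEN iffD1, rotated]) (simp add: a_def)
  then have a: "a permutes {..<n}"
    by (rule bij_imp_permutes) (simp add: a_def)
  have "bij_betw \<kappa> {n..<n + m} {n..<n + m}"
    using high permutes_inj_on[OF p] by (simp add: bij_betw_def)
  then have "bij_betw c {n..<n + m} {n..<n + m}"
    by (rule bij_betw_cong[THEN iffD1, rotated]) (simp add: c_def)
  then have c: "c permutes {n..<n + m}"
    by (rule bij_imp_permutes) (use permutes_not_in[OF p] in \<open>simp add: c_def\<close>)
  obtain b where b: "b permutes (\<lambda>x. x - (n - 1)) ` {n..<n + m}" "c = shift_perm (n - 1) b"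
    by (rule shift_perm_unshift[OF c, of "n - 1"]) auto
  have "(\<lambda>x. x - (n - 1)) ` {n..<n + m} = {1..<Suc m}"
    using assms(2) by (subst image_minus_const_atLeastLessThan_nat) auto
  moreover have "\<kappa> = a \<circ> c"
  proof
    fix x
    have "n \<le> \<kappa> x" if "n \<le> x"
      using that high permutes_not_in[OF p, of x] by (cases "x < n + m") auto
    then show "\<kappa> x = (a \<circ> c) x"
      by (cases "x < n") (auto simp: a_def c_def)
  qed
  ultimately show ?thesis
    using that a b by simp
qed

lemma jacobi_coeff_permute_block_perm:
  assumes "\<kappa> \<in> block_perms n (length M)" "0 < n" "n \<le> length M"
  shows "jacobi_coeff q n (permute_list \<kappa> M) = of_int (sign \<kappa>) * jacobi_coeff q n M"
proof -
  define m where "m = length M - n"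
  have M: "length M = n + m"
    using assms(3) by (simp add: m_def)
  obtain a b where a: "a permutes {..<n}" and b: "b permutes {1..<Suc m}"
    and \<kappa>: "\<kappa> = a \<circ> shift_perm (n - 1) b"
    using block_perms_decompose[of \<kappa> n m] assms(1,2) M by auto
  have aM: "a permutes {..<length M}"
    using a M by (auto intro: permutes_subset)
  have s: "shift_perm (n - 1) b permutes {..<length M}" "sign (shift_perm (n - 1) b) = sign b"
    using shift_perm_high_block[OF b assms(2)] M by simp_all
  have "take n (permute_list \<kappa> M) = permute_list a (take n M)"
    "outer_indices n (permute_list \<kappa> M) = permute_list b (outer_indices n M)"
    using permute_list_high_block[OF b _ assms(2), of "permute_list a M"]
      permute_list_low_block[OF a assms(3)] M s(1)
    by (simp_all add: \<kappa> permute_list_compose)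
  moreover have "sign \<kappa> = sign a * sign b"
    using sign_compose_permutes[OF aM s(1)] s(2) by (simp add: \<kappa>)
  moreover have "b permutes {..<length (outer_indices n M)}"
    using b M by (auto intro: permutes_subset)
  ultimately show ?thesis
    using a assms(3) by (simp add: jacobi_coeff_def alt_coeff_permute_list min_absorb2 mult_ac)
qed

lemma shuffle_sum_jacobi_coeff_eq_zero:
  assumes "even n" "0 < n" "q \<noteq> 0" "length L = 2 * n - 1"
  shows "(\<Sum>\<sigma>\<in>shuffles n (2 * n - 1). of_int (sign \<sigma>) * jacobi_coeff q n (permute_list \<sigma> L)) = 0"
proof -
  let ?G = "\<lambda>\<sigma>. of_int (sign \<sigma>) * jacobi_coeff q n (permute_list \<sigma> L)"
  have "?G (\<tau> \<circ> \<kappa>) = ?G \<tau>"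
    if "\<tau> permutes {..<2 * n - 1}" "\<kappa> \<in> block_perms n (2 * n - 1)" for \<tau> \<kappa>
  proof -
    have "\<kappa> permutes {..<length L}"
      using that(2) assms(4) by (simp add: block_perms_def)
    then show ?thesis
      using that jacobi_coeff_permute_block_perm[of \<kappa> n "permute_list \<tau> L" q] assms
      by (simp add: permute_list_compose sign_compose_permutes mult.assoc flip: of_int_mult)
  qed
  then have "of_nat (card (block_perms n (2 * n - 1))) * (\<Sum>\<sigma>\<in>shuffles n (2 * n - 1). ?G \<sigma>) = 0"
    using sum_permutations_eq_card_block_perms_mult_sum_shuffles[of n "2 * n - 1" ?G]
      alt_sum_jacobi_coeff_eq_zero[OF assms] assms(4)
    by simp
  then show ?thesis
    using card_block_perms_pos[of n "2 * n - 1"] by simp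
qed

section \<open>Multilinear extension\<close>

definition support_lists :: "vec list \<Rightarrow> (int \<times> int) list set" where
  "support_lists xs = {ms. list_all2 (\<lambda>v m. v m \<noteq> 0) xs ms}"

definition coeff_prod :: "vec list \<Rightarrow> (int \<times> int) list \<Rightarrow> complex" where
  "coeff_prod xs ms = prod_list (map2 (\<lambda>v m. v m) xs ms)"

lemma support_lists_Nil [simp]: "support_lists [] = {[]}"
  by (simp add: support_lists_def)

lemma support_lists_Cons:
  "support_lists (v # vs) = (\<lambda>(m, ms). m # ms) ` ({m. v m \<noteq> 0} \<times> support_lists vs)"
  by (auto simp: support_lists_def list_all2_Cons1)

lemma support_lists_append:
  "support_lists (ys @ zs) = (\<lambda>(ls, ms). ls @ ms) ` (support_lists ys \<times> support_lists zs)"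
  by (fastforce simp: support_lists_def list_all2_append1 list_all2_lengthD)

lemma length_support_lists: "ms \<in> support_lists xs \<Longrightarrow> length ms = length xs"
  by (simp add: support_lists_def list_all2_lengthD)

lemma coeff_prod_Cons [simp]: "coeff_prod (v # vs) (m # ms) = v m * coeff_prod vs ms"
  by (simp add: coeff_prod_def)

lemma coeff_prod_append:
  "length ls = length ys \<Longrightarrow> coeff_prod (ys @ zs) (ls @ ms) = coeff_prod ys ls * coeff_prod zs ms"
  by (simp add: coeff_prod_def)

lemma finite_support_lists: "set xs \<subseteq> Vspace \<Longrightarrow> finite (support_lists xs)"
  by (induction xs) (auto simp: support_lists_Cons Vspace_def)

lemma mlext_eq_sum_support_lists:
  "mlext f xs k = (\<Sum>ms\<in>support_lists xs. coeff_prod xs ms * f ms k)"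
proof (induction xs arbitrary: f)
  case Nil
  then show ?case
    by (simp add: coeff_prod_def)
next
  case (Cons v vs)
  have "inj_on (\<lambda>(m, ms). m # ms) ({m. v m \<noteq> 0} \<times> support_lists vs)"
    by (auto intro: inj_onI)
  then show ?case
    by (simp add: Cons.IH support_lists_Cons sum.reindex sum.cartesian_product sum_distrib_left
        mult.assoc split_def)
qed

lemma permute_list_inv_permute_list:
  assumes "\<sigma> permutes {..<length xs}"
  shows "permute_list (inv \<sigma>) (permute_list \<sigma> xs) = xs"
  using permute_list_compose[of "inv \<sigma>" xs \<sigma>] permutes_inv[OF assms] permutes_inv_o(1)[OF assms]
  by simp

lemma zip_permute_list:
  assumes "\<sigma> permutes {..<length xs}" "length ys = length xs"
  shows "zip (permute_list \<sigma> xs) (permute_list \<sigma> ys) = permute_list \<sigma> (zip xs ys)"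
  by (rule permute_list_zip[OF assms(1) refl, symmetric]) (use assms(2) in simp)

lemma list_all2_permute_list:
  assumes "\<sigma> permutes {..<length xs}" "length ys = length xs"
  shows "list_all2 P (permute_list \<sigma> xs) (permute_list \<sigma> ys) \<longleftrightarrow> list_all2 P xs ys"
  using assms by (simp add: list_all2_iff zip_permute_list)

lemma coeff_prod_permute_list:
  assumes "\<sigma> permutes {..<length xs}" "length ms = length xs"
  shows "coeff_prod (permute_list \<sigma> xs) (permute_list \<sigma> ms) = coeff_prod xs ms"
  using assms by (simp add: coeff_prod_def zip_permute_list permute_list_map flip: prod_mset_prod_list)

lemma sum_support_lists_permute_list:
  assumes "\<sigma> permutes {..<length xs}"
  shows "(\<Sum>K\<in>support_lists (permute_list \<sigma> xs). coeff_prod (permute_list \<sigma> xs) K * \<Phi> K)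
       = (\<Sum>J\<in>support_lists xs. coeff_prod xs J * \<Phi> (permute_list \<sigma> J))"
proof (rule sum.reindex_bij_witness[where i = "permute_list \<sigma>" and j = "permute_list (inv \<sigma>)"])
  have inv: "inv \<sigma> permutes {..<length (permute_list \<sigma> xs)}"
    using permutes_inv[OF assms] by simp
  fix K
  assume "K \<in> support_lists (permute_list \<sigma> xs)"
  then have K: "list_all2 (\<lambda>v m. v m \<noteq> 0) (permute_list \<sigma> xs) K" "length K = length xs"
    by (auto simp: support_lists_def dest: list_all2_lengthD)
  show K_eq: "permute_list \<sigma> (permute_list (inv \<sigma>) K) = K"
    using permute_list_inv_permute_list[of "inv \<sigma>" K] permutes_inv[OF assms] K(2)
      inv_inv_eq[OF permutes_bij[OF assms]]
    by simp
  show "permute_list (inv \<sigma>) K \<in> support_lists xs"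
    using K list_all2_permute_list[OF inv, of K] assms
    by (simp add: support_lists_def permute_list_inv_permute_list)
  show "coeff_prod xs (permute_list (inv \<sigma>) K) * \<Phi> (permute_list \<sigma> (permute_list (inv \<sigma>) K))
      = coeff_prod (permute_list \<sigma> xs) K * \<Phi> K"
    using coeff_prod_permute_list[OF inv, of K] K(2)
    unfolding K_eq permute_list_inv_permute_list[OF assms] by simp
next
  fix J
  assume "J \<in> support_lists xs"
  then have J: "list_all2 (\<lambda>v m. v m \<noteq> 0) xs J" "length J = length xs"
    by (auto simp: support_lists_def dest: list_all2_lengthD)
  show "permute_list (inv \<sigma>) (permute_list \<sigma> J) = J"
    using permute_list_inv_permute_list[of \<sigma> J] assms J(2) by simp
  show "permute_list \<sigma> J \<in> support_lists (permute_list \<sigma> xs)"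
    using J list_all2_permute_list[OF assms, of J] by (simp add: support_lists_def)
qed

lemma sum_support_lists_append:
  "(\<Sum>ls\<in>support_lists ys. \<Sum>ms\<in>support_lists zs. coeff_prod ys ls * coeff_prod zs ms * \<Psi> ls ms)
 = (\<Sum>K\<in>support_lists (ys @ zs).
      coeff_prod (ys @ zs) K * \<Psi> (take (length ys) K) (drop (length ys) K))"
proof -
  have "inj_on (\<lambda>(ls, ms). ls @ ms) (support_lists ys \<times> support_lists zs)"
    by (rule inj_onI) (auto simp: append_eq_append_conv length_support_lists)
  then show ?thesis
    by (auto simp: support_lists_append sum.reindex sum.cartesian_product coeff_prod_append
        length_support_lists intro!: sum.cong)
qed

lemma mlext_Cons_combination:
  assumes "finite L"
  shows "mlext f ((\<lambda>m. \<Sum>l\<in>L. a l * (if m = s l then 1 else 0)) # vs) k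
       = (\<Sum>l\<in>L. a l * mlext (\<lambda>ms. f (s l # ms)) vs k)"
proof -
  define v where "v m = (\<Sum>l\<in>L. a l * (if m = s l then 1 else 0))" for m
  define G where "G m = mlext (\<lambda>ms. f (m # ms)) vs k" for m
  have "v m = 0" if "m \<notin> s ` L" for m
    using that by (auto simp: v_def intro!: sum.neutral)
  then have "{m. v m \<noteq> 0} \<subseteq> s ` L"
    by blast
  then have "(\<Sum>m\<in>{m. v m \<noteq> 0}. v m * G m) = (\<Sum>m\<in>s ` L. v m * G m)"
    using assms by (intro sum.mono_neutral_left) auto
  also have "\<dots> = (\<Sum>l\<in>L. \<Sum>m\<in>s ` L. if m = s l then a l * G m else 0)"
    unfolding v_def sum_distrib_right by (subst sum.swap) (auto intro!: sum.cong)
  also have "\<dots> = (\<Sum>l\<in>L. a l * G (s l))"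
    using assms by (simp add: sum.delta)
  finally show ?thesis
    by (simp add: v_def G_def)
qed

lemma qbr_apply: "qbr q xs k = (\<Sum>ms\<in>support_lists xs. coeff_prod xs ms * qbr_basis q ms k)"
  unfolding qbr_def by (rule mlext_eq_sum_support_lists)

lemma qbr_in_Vspace:
  assumes "set xs \<subseteq> Vspace"
  shows "qbr q xs \<in> Vspace"
proof -
  have "qbr q xs k = 0" if "k \<notin> sum_list ` support_lists xs" for k
    using that by (auto simp: qbr_apply qbr_basis_apply intro!: sum.neutral)
  then have "{k. qbr q xs k \<noteq> 0} \<subseteq> sum_list ` support_lists xs"
    by blast
  then show ?thesis
    using finite_support_lists[OF assms] by (auto simp: Vspace_def intro: finite_subset)
qed

lemma qbr_permute_list:
  assumes "\<sigma> permutes {..<length xs}"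
  shows "qbr q (permute_list \<sigma> xs) = smul (of_int (sign \<sigma>)) (qbr q xs)"
proof
  fix k
  have "qbr_basis q (permute_list \<sigma> J) k = of_int (sign \<sigma>) * qbr_basis q J k"
    if "J \<in> support_lists xs" for J
    using assms length_support_lists[OF that]
    by (simp add: qbr_basis_apply alt_coeff_permute_list sum_list_permute_list)
  then show "qbr q (permute_list \<sigma> xs) k = smul (of_int (sign \<sigma>)) (qbr q xs) k"
    unfolding qbr_apply sum_support_lists_permute_list[OF assms] smul_def
    by (simp add: sum_distrib_left mult.left_commute)
qed

lemma sum_list_outer_indices [simp]: "sum_list (outer_indices n M) = sum_list M"
  by (simp add: outer_indices_def flip: sum_list_append)

lemma qbr_nested_apply:
  assumes "set xs \<subseteq> Vspace" "\<sigma> permutes {..<length xs}" "n \<le> length xs"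
  shows "qbr q (qbr q (take n (permute_list \<sigma> xs)) # drop n (permute_list \<sigma> xs)) t
       = (\<Sum>J\<in>support_lists xs. coeff_prod xs J *
            ((1 / (q - inverse q))\<^sup>2 * (if t = sum_list J then 1 else 0) *
             jacobi_coeff q n (permute_list \<sigma> J)))"
proof -
  define c where "c = 1 / (q - inverse q)"
  define ys where "ys = take n (permute_list \<sigma> xs)"
  define zs where "zs = drop n (permute_list \<sigma> xs)"
  define \<Psi> where "\<Psi> ls ms = c * alt_coeff q ls * qbr_basis q (sum_list ls # ms) t" for ls ms
  have ys: "set ys \<subseteq> Vspace"
    using assms(1,2) set_take_subset[of n "permute_list \<sigma> xs"] by (auto simp: ys_def)
  have comb: "qbr q ys = (\<lambda>m. \<Sum>ls\<in>support_lists ys.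
      coeff_prod ys ls * (c * alt_coeff q ls) * (if m = sum_list ls then 1 else 0))"
    by (simp add: fun_eq_iff qbr_apply qbr_basis_apply c_def mult.assoc)
  have "qbr q (qbr q ys # zs) t
      = (\<Sum>ls\<in>support_lists ys. coeff_prod ys ls * (c * alt_coeff q ls) *
           mlext (\<lambda>ms. qbr_basis q (sum_list ls # ms)) zs t)"
    unfolding comb unfolding qbr_def by (rule mlext_Cons_combination[OF finite_support_lists[OF ys]])
  also have "\<dots> = (\<Sum>ls\<in>support_lists ys. \<Sum>ms\<in>support_lists zs.
                       coeff_prod ys ls * coeff_prod zs ms * \<Psi> ls ms)"
    by (simp add: mlext_eq_sum_support_lists \<Psi>_def sum_distrib_left mult_ac)
  also have "\<dots> = (\<Sum>J\<in>support_lists xs. coeff_prod xs J *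
                       \<Psi> (take n (permute_list \<sigma> J)) (drop n (permute_list \<sigma> J)))"
    using sum_support_lists_append[of ys zs \<Psi>] assms(3)
      sum_support_lists_permute_list[OF assms(2)]
    by (simp add: ys_def zs_def min_absorb1)
  also have "\<dots> = (\<Sum>J\<in>support_lists xs. coeff_prod xs J *
                       (c\<^sup>2 * (if t = sum_list J then 1 else 0) * jacobi_coeff q n (permute_list \<sigma> J)))"
    using assms(2)
    by (intro sum.cong refl)
      (simp add: \<Psi>_def qbr_basis_apply jacobi_coeff_def power2_eq_square sum_list_permute_list
        length_support_lists c_def[symmetric] flip: outer_indices_def)
  finally show ?thesis
    by (simp add: ys_def zs_def c_def)
qed

lemma qbr_shuffle_jacobi:
  assumes "even n" "0 < n" "q \<noteq> 0" "set xs \<subseteq> Vspace" "length xs = 2 * n - 1"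
  shows "(\<Sum>\<sigma>\<in>shuffles n (2 * n - 1). of_int (sign \<sigma>) *
           qbr q (qbr q (take n (permute_list \<sigma> xs)) # drop n (permute_list \<sigma> xs)) t) = 0"
proof -
  define c where "c J = (1 / (q - inverse q))\<^sup>2 * (if t = sum_list J then 1 else (0::complex))" for J
  have "(\<Sum>\<sigma>\<in>shuffles n (2 * n - 1). of_int (sign \<sigma>) *
           qbr q (qbr q (take n (permute_list \<sigma> xs)) # drop n (permute_list \<sigma> xs)) t)
      = (\<Sum>\<sigma>\<in>shuffles n (2 * n - 1). \<Sum>J\<in>support_lists xs.
           coeff_prod xs J * c J * (of_int (sign \<sigma>) * jacobi_coeff q n (permute_list \<sigma> J)))"
    using assms(2,4,5)
    by (intro sum.cong refl)
      (simp add: shuffles_def qbr_nested_apply sum_distrib_left c_def mult_ac)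
  also have "\<dots> = (\<Sum>J\<in>support_lists xs. coeff_prod xs J * c J *
      (\<Sum>\<sigma>\<in>shuffles n (2 * n - 1). of_int (sign \<sigma>) * jacobi_coeff q n (permute_list \<sigma> J)))"
    by (subst sum.swap) (simp add: sum_distrib_left)
  also have "\<dots> = 0"
    using shuffle_sum_jacobi_coeff_eq_zero[OF assms(1-3)] assms(5)
    by (simp add: length_support_lists)
  finally show ?thesis .
qed

theorem proposition7:
  fixes q :: complex and n :: nat
  assumes "q \<noteq> 0" and "q \<noteq> 1" and "q \<noteq> -1"
    and "even n" and "n \<ge> 2"
  shows "sh_n_Lie n (qbr q)"
proof -
  \<comment> \<open>q \<noteq> \<plusminus>1 only makes q - q\<inverse> invertible; with x / 0 = 0 the identities hold regardless\<close>
  have n: "0 < n" "n \<le> 2 * n - 1"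
    using assms(5) by auto
  have permute: "map (\<lambda>k. xs ! \<sigma> k) [0..<length xs] = permute_list \<sigma> xs" for xs :: "vec list" and \<sigma>
    by (simp add: permute_list_def)
  have blocks: "map (\<lambda>k. xs ! \<sigma> k) [0..<n] = take n (permute_list \<sigma> xs)"
    "map (\<lambda>k. xs ! \<sigma> k) [n..<2 * n - 1] = drop n (permute_list \<sigma> xs)"
    if "length xs = 2 * n - 1" for xs :: "vec list" and \<sigma>
    using that n by (simp_all add: permute_list_def take_map drop_map)
  show ?thesis
    unfolding sh_n_Lie_def
    using qbr_in_Vspace qbr_permute_list permute qbr_shuffle_jacobi[OF assms(4) n(1) assms(1)] blocks
    by (auto simp: shuffles_def fun_eq_iff)
qed

end
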